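(* The essential set of a polyomino $A$ is empty if and only if $A$ has a SE-source.
   Context: A $(0,1)$-matrix is convex if in every row and every column the 1's occur consecutively; it is connected if it has no zero row or column and any two 1's are joined by a path of 1's with consecutive ones horizontally or vertically adjacent. A polyomino is a connected convex $(0,1)$-matrix. A SE-source of a $(0,1)$-matrix is a 1 from which every other 1 can be reached by a path of 1's in which each step goes from a 1 to the horizontally adjacent 1 to its east or the vertically adjacent 1 to its south. The diagram of an $m\times n$ $(0,1)$-matrix $A$: for each 1 of $A$ at $(i,j)$ shade all positions $(i,j')$, $j'\ge j$, and $(i',j)$, $i'\ge i$; the diagram is the set of unshaded positions. The essential set is the set of positions $(i,j)$ of the diagram such that neither $(i+1,j)$ nor $(i,j+1)$ lies in the diagram. *)

theory Defs
  imports Main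
begin

text \<open>An m x n (0,1)-matrix is represented by its dimensions m, n and a predicate
  A :: nat => nat => bool, where A i j means entry (i,j) equals 1; indices are
  0-based, rows i < m and columns j < n. Entries outside this range are ignored.\<close>

definition pos :: "nat \<Rightarrow> nat \<Rightarrow> nat \<times> nat \<Rightarrow> bool" where
  "pos m n p \<longleftrightarrow> fst p < m \<and> snd p < n"

definition one :: "nat \<Rightarrow> nat \<Rightarrow> (nat \<Rightarrow> nat \<Rightarrow> bool) \<Rightarrow> nat \<times> nat \<Rightarrow> bool" where
  "one m n A p \<longleftrightarrow> pos m n p \<and> A (fst p) (snd p)"

definition convex01 :: "nat \<Rightarrow> nat \<Rightarrow> (nat \<Rightarrow> nat \<Rightarrow> bool) \<Rightarrow> bool" where
  "convex01 m n A \<longleftrightarrow>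
     (\<forall>i j1 j2 j. i < m \<and> j2 < n \<and> A i j1 \<and> A i j2 \<and> j1 \<le> j \<and> j \<le> j2 \<longrightarrow> A i j) \<and>
     (\<forall>j i1 i2 i. j < n \<and> i2 < m \<and> A i1 j \<and> A i2 j \<and> i1 \<le> i \<and> i \<le> i2 \<longrightarrow> A i j)"

definition adj_step :: "nat \<Rightarrow> nat \<Rightarrow> (nat \<Rightarrow> nat \<Rightarrow> bool) \<Rightarrow> nat \<times> nat \<Rightarrow> nat \<times> nat \<Rightarrow> bool" where
  "adj_step m n A p q \<longleftrightarrow> one m n A p \<and> one m n A q \<and>
     ((fst p = fst q \<and> (snd q = snd p + 1 \<or> snd p = snd q + 1)) \<or>
      (snd p = snd q \<and> (fst q = fst p + 1 \<or> fst p = fst q + 1)))"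

definition connected01 :: "nat \<Rightarrow> nat \<Rightarrow> (nat \<Rightarrow> nat \<Rightarrow> bool) \<Rightarrow> bool" where
  "connected01 m n A \<longleftrightarrow>
     (\<forall>i<m. \<exists>j<n. A i j) \<and> (\<forall>j<n. \<exists>i<m. A i j) \<and>
     (\<forall>p q. one m n A p \<and> one m n A q \<longrightarrow> (adj_step m n A)\<^sup>*\<^sup>* p q)"

definition polyomino :: "nat \<Rightarrow> nat \<Rightarrow> (nat \<Rightarrow> nat \<Rightarrow> bool) \<Rightarrow> bool" where
  "polyomino m n A \<longleftrightarrow> connected01 m n A \<and> convex01 m n A"

definition se_step :: "nat \<Rightarrow> nat \<Rightarrow> (nat \<Rightarrow> nat \<Rightarrow> bool) \<Rightarrow> nat \<times> nat \<Rightarrow> nat \<times> nat \<Rightarrow> bool" where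
  "se_step m n A p q \<longleftrightarrow> one m n A p \<and> one m n A q \<and>
     ((fst q = fst p \<and> snd q = snd p + 1) \<or> (snd q = snd p \<and> fst q = fst p + 1))"

definition SE_source :: "nat \<Rightarrow> nat \<Rightarrow> (nat \<Rightarrow> nat \<Rightarrow> bool) \<Rightarrow> nat \<times> nat \<Rightarrow> bool" where
  "SE_source m n A p \<longleftrightarrow> one m n A p \<and> (\<forall>q. one m n A q \<longrightarrow> (se_step m n A)\<^sup>*\<^sup>* p q)"

text \<open>A position is shaded iff there is a 1 weakly to its west in the same row
  or weakly to its north in the same column. The diagram is the set of unshaded positions.\<close>
definition diagram :: "nat \<Rightarrow> nat \<Rightarrow> (nat \<Rightarrow> nat \<Rightarrow> bool) \<Rightarrow> (nat \<times> nat) set" where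
  "diagram m n A = {(i, j). i < m \<and> j < n \<and>
      \<not> (\<exists>j'\<le>j. A i j') \<and> \<not> (\<exists>i'\<le>i. A i' j)}"

definition essential_set :: "nat \<Rightarrow> nat \<Rightarrow> (nat \<Rightarrow> nat \<Rightarrow> bool) \<Rightarrow> (nat \<times> nat) set" where
  "essential_set m n A = {(i, j). (i, j) \<in> diagram m n A \<and>
      (i + 1, j) \<notin> diagram m n A \<and> (i, j + 1) \<notin> diagram m n A}"

end

theory Submission
  imports Defs
begin

text \<open>Walking south or east inside the diagram must end at an essential position, so the
  essential set is empty exactly when the diagram is. If the diagram is empty, every 1 at (i,j)
  other than (0,0) has a 1 directly north or west of it. Otherwise, as (i-1,j) and (i,j-1) are
  shaded, convexity puts a 1 in row i-1 weakly west of column j and a 1 in column j-1 weakly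
  north of row i; a path of 1's from the former to (i,j) enters the quadrant south-east of (i,j)
  from row i-1 or from column j-1, and convexity then yields the missing neighbour. Hence (0,0)
  is an SE-source. Conversely an SE-source lies in column 0, since column 0 contains a 1 and
  SE-paths are monotone; for an unshaded (i,j), the SE-path from the source to a 1 of row i,
  which lies east of column j, crosses column j above row i, so (i,j) is shaded after all.\<close>

lemma essential_set_nonempty_if_in_diagram:
  assumes "(i, j) \<in> diagram m n A"
  shows "essential_set m n A \<noteq> {}"
  using assms
proof (induction "m + n - (i + j)" arbitrary: i j rule: less_induct)
  case less
  then have "i < m" "j < n" by (auto simp: diagram_def)
  show ?case
  proof (cases "(i + 1, j) \<in> diagram m n A \<or> (i, j + 1) \<in> diagram m n A")
    case True
    have "m + n - (i + 1 + j) < m + n - (i + j)" "m + n - (i + (j + 1)) < m + n - (i + j)"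
      using \<open>i < m\<close> \<open>j < n\<close> by auto
    with True show ?thesis
      using less.hyps by blast
  next
    case False
    with less.prems have "(i, j) \<in> essential_set m n A" by (auto simp: essential_set_def)
    then show ?thesis by blast
  qed
qed

lemma essential_set_empty_iff_diagram_empty:
  "essential_set m n A = {} \<longleftrightarrow> diagram m n A = {}"
  using essential_set_nonempty_if_in_diagram[of _ _ m n A] by (auto simp: essential_set_def)

lemma convex01_rowD:
  assumes "convex01 m n A" "i < m" "j2 < n" "A i j1" "A i j2" "j1 \<le> j" "j \<le> j2"
  shows "A i j"
  using assms unfolding convex01_def by blast

lemma convex01_colD:
  assumes "convex01 m n A" "j < n" "i2 < m" "A i1 j" "A i2 j" "i1 \<le> i" "i \<le> i2"
  shows "A i j"
  using assms unfolding convex01_def by blast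

lemma adj_path_enters_quadrant:
  assumes "(adj_step m n A)\<^sup>*\<^sup>* p q"
    and "\<not> (i \<le> fst p \<and> j \<le> snd p)" "i \<le> fst q" "j \<le> snd q"
  shows "(\<exists>x\<ge>i. 0 < j \<and> one m n A (x, j - 1)) \<or> (\<exists>y\<ge>j. 0 < i \<and> one m n A (i - 1, y))"
  using assms(1,3,4)
proof (induction rule: rtranclp_induct)
  case base
  with assms(2) show ?case by simp
next
  case (step q r)
  show ?case
  proof (cases "i \<le> fst q \<and> j \<le> snd q")
    case True
    with step.IH show ?thesis by blast
  next
    case False
    with step.hyps(2) step.prems have "one m n A q"
      and "(0 < j \<and> snd q = j - 1 \<and> i \<le> fst q) \<or> (0 < i \<and> fst q = i - 1 \<and> j \<le> snd q)"
      by (auto simp: adj_step_def)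
    then show ?thesis by (metis prod.collapse)
  qed
qed

lemma north_or_west_one_if_diagram_empty:
  assumes conv: "convex01 m n A" and conn: "connected01 m n A"
    and empty: "diagram m n A = {}"
    and ij: "i < m" "j < n" "A i j" and not_corner: "(i, j) \<noteq> (0, 0)"
  shows "(0 < i \<and> A (i - 1) j) \<or> (0 < j \<and> A i (j - 1))"
proof (rule ccontr)
  assume "\<not> ?thesis"
  then have no_north: "0 < i \<Longrightarrow> \<not> A (i - 1) j" and no_west: "0 < j \<Longrightarrow> \<not> A i (j - 1)"
    by auto
  have shaded: "(\<exists>y\<le>b. A a y) \<or> (\<exists>x\<le>a. A x b)" if "a < m" "b < n" for a b
    using empty that unfolding diagram_def by blast
  have row_west: "\<not> A i y" if "y < j" for y
    using convex01_rowD[OF conv, of i j y "j - 1"] no_west ij that by fastforce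
  have col_north: "\<not> A x j" if "x < i" for x
    using convex01_colD[OF conv, of j i x "i - 1"] no_north ij that by fastforce
  have col_west: "\<exists>x\<le>i. A x (j - 1)" if "0 < j"
    using shaded[of i "j - 1"] row_west ij that by force
  have row_north: "\<exists>y\<le>j. A (i - 1) y" if "0 < i"
    using shaded[of "i - 1" j] col_north ij that by force
  consider "i = 0" "0 < j" | "0 < i" "j = 0" | "0 < i" "0 < j"
    using not_corner by blast
  then show False
  proof cases
    case 1
    then show False using col_west no_west by auto
  next
    case 2
    then show False using row_north no_north by auto
  next
    case 3
    obtain a where a: "a \<le> i" "A a (j - 1)" using col_west 3 by blast
    obtain b where b: "b \<le> j" "A (i - 1) b" using row_north 3 by blast
    have path: "(adj_step m n A)\<^sup>*\<^sup>* (i - 1, b) (i, j)"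
      using conn ij b \<open>0 < i\<close> unfolding connected01_def by (auto simp: one_def pos_def)
    have "\<not> (i \<le> fst (i - 1, b) \<and> j \<le> snd (i - 1, b))"
      using 3 by auto
    from adj_path_enters_quadrant[OF path this] 3
    consider x where "i \<le> x" "one m n A (x, j - 1)" | y where "j \<le> y" "one m n A (i - 1, y)"
      by auto
    then show False
    proof cases
      case 1
      then show False
        using convex01_colD[OF conv, of "j - 1" x a i] a no_west 3 ij by (auto simp: one_def pos_def)
    next
      case 2
      then show False
        using convex01_rowD[OF conv, of "i - 1" y b j] b no_north 3 ij by (auto simp: one_def pos_def)
    qed
  qed
qed

lemma se_reachable_from_corner_if_diagram_empty:
  assumes "convex01 m n A" "connected01 m n A" "diagram m n A = {}"
  shows "i < m \<Longrightarrow> j < n \<Longrightarrow> A i j \<Longrightarrow> (se_step m n A)\<^sup>*\<^sup>* (0, 0) (i, j)"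
proof (induction "i + j" arbitrary: i j rule: less_induct)
  case less
  show ?case
  proof (cases "(i, j) = (0, 0)")
    case True
    then show ?thesis by simp
  next
    case False
    from north_or_west_one_if_diagram_empty[OF assms less.prems False]
    show ?thesis
    proof
      assume north: "0 < i \<and> A (i - 1) j"
      with less have "(se_step m n A)\<^sup>*\<^sup>* (0, 0) (i - 1, j)" by simp
      moreover have "se_step m n A (i - 1, j) (i, j)"
        using north less.prems by (auto simp: se_step_def one_def pos_def)
      ultimately show ?thesis by (rule rtranclp.rtrancl_into_rtrancl)
    next
      assume west: "0 < j \<and> A i (j - 1)"
      with less have "(se_step m n A)\<^sup>*\<^sup>* (0, 0) (i, j - 1)" by simp
      moreover have "se_step m n A (i, j - 1) (i, j)"
        using west less.prems by (auto simp: se_step_def one_def pos_def)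
      ultimately show ?thesis by (rule rtranclp.rtrancl_into_rtrancl)
    qed
  qed
qed

lemma SE_source_corner_if_diagram_empty:
  assumes "0 < m" "0 < n" "convex01 m n A" "connected01 m n A" "diagram m n A = {}"
  shows "SE_source m n A (0, 0)"
proof -
  have "A 0 0"
    using assms(1,2,5) unfolding diagram_def by auto
  then show ?thesis
    using se_reachable_from_corner_if_diagram_empty[OF assms(3-5)] assms(1,2)
    by (auto simp: SE_source_def one_def pos_def)
qed

lemma se_path_mono:
  assumes "(se_step m n A)\<^sup>*\<^sup>* p q"
  shows "fst p \<le> fst q \<and> snd p \<le> snd q"
  using assms by (induction rule: rtranclp_induct) (auto simp: se_step_def)

lemma se_path_meets_column:
  assumes "(se_step m n A)\<^sup>*\<^sup>* p q" "one m n A p" "snd p \<le> j" "j \<le> snd q"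
  shows "\<exists>x\<le>fst q. one m n A (x, j)"
  using assms(1,4)
proof (induction rule: rtranclp_induct)
  case base
  with assms(2,3) show ?case by (cases p) auto
next
  case (step q r)
  show ?case
  proof (cases "j \<le> snd q")
    case True
    moreover have "fst q \<le> fst r"
      using step.hyps(2) by (auto simp: se_step_def)
    ultimately show ?thesis
      using step.IH le_trans by blast
  next
    case False
    with step.hyps(2) step.prems have "snd r = j" "one m n A r"
      by (auto simp: se_step_def)
    then show ?thesis by (metis order_refl prod.collapse)
  qed
qed

lemma diagram_empty_if_SE_source:
  assumes "0 < n" and conn: "connected01 m n A" and source: "SE_source m n A p"
  shows "diagram m n A = {}"
proof -
  have reach: "(se_step m n A)\<^sup>*\<^sup>* p q" if "one m n A q" for q
    using source that unfolding SE_source_def by blast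
  obtain r where "r < m" "A r 0"
    using conn \<open>0 < n\<close> unfolding connected01_def by blast
  then have "snd p = 0"
    using se_path_mono[OF reach[of "(r, 0)"]] \<open>0 < n\<close> by (simp add: one_def pos_def)
  have "(i, j) \<notin> diagram m n A" for i j
  proof
    assume "(i, j) \<in> diagram m n A"
    then have ij: "i < m" "j < n" and unshaded: "\<not> (\<exists>y\<le>j. A i y)" "\<not> (\<exists>x\<le>i. A x j)"
      by (auto simp: diagram_def)
    obtain k where "k < n" "A i k"
      using conn ij unfolding connected01_def by blast
    with unshaded have "j \<le> k" by (meson nat_le_linear)
    have "(se_step m n A)\<^sup>*\<^sup>* p (i, k)"
      using reach \<open>k < n\<close> \<open>A i k\<close> ij by (simp add: one_def pos_def)
    from se_path_meets_column[OF this, of j] source \<open>snd p = 0\<close> \<open>j \<le> k\<close>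
    obtain x where "x \<le> i" "A x j"
      by (auto simp: SE_source_def one_def)
    with unshaded show False by blast
  qed
  then show ?thesis by auto
qed

theorem mainTheorem3:
  fixes m n :: nat and A :: "nat \<Rightarrow> nat \<Rightarrow> bool"
  assumes "0 < m" and "0 < n"
    and "polyomino m n A"
  shows "essential_set m n A = {} \<longleftrightarrow> (\<exists>p. SE_source m n A p)"
proof -
  from assms(3) have conv: "convex01 m n A" and conn: "connected01 m n A"
    by (auto simp: polyomino_def)
  have "diagram m n A = {} \<longleftrightarrow> (\<exists>p. SE_source m n A p)"
    using SE_source_corner_if_diagram_empty[OF assms(1,2) conv conn]
      diagram_empty_if_SE_source[OF assms(2) conn] by blast
  then show ?thesis
    by (simp add: essential_set_empty_iff_diagram_empty)
qed

end
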